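(* Let $a>0$, let $v:\mathbb{R}\to[v_0,\infty)$ be continuously differentiable with $v_0>0$, fix $r>a/v_0$, and let $C=C([-r,0],\mathbb{R})$ with the norm $|\phi|=\max_{-r\le t\le 0}|\phi(t)|$. For $\phi\in C$ let $\delta(\phi)\in(0,r)$ be the unique solution $u$ of $a=\int_{-u}^0 v(\phi(s))\,ds$. Then the map $\delta:C\to(0,r)$ is continuously differentiable with $$D\delta(\phi)\chi=-\frac{\int_{-\delta(\phi)}^0 v'(\phi(s))\chi(s)\,ds}{v(\phi(-\delta(\phi)))}\qquad(\chi\in C).$$ Moreover, if $\phi(s)=\xi$ for all $s\in[-r,0]$, then $\delta(\phi)=a/v(\xi)$ and $$D\delta(\phi)\chi=-\frac{v'(\xi)}{v(\xi)}\int_{-a/v(\xi)}^0\chi(s)\,ds.$$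
   Context: Since $v\ge v_0>0$ is continuous, for every $\phi\in C$ the equation $a=\int_{-u}^0 v(\phi(s))\,ds$ has a unique solution $u\in(0,r)$; this defines $\delta$. *)

theory Defs
  imports "HOL-Analysis.Analysis"
begin

text \<open>The Banach space C = C([-r,0],R), represented by real functions that are
  continuous on [-r,0]; only their values on [-r,0] matter.\<close>
definition Cspace :: "real \<Rightarrow> (real \<Rightarrow> real) set" where
  "Cspace r = {\<phi>. continuous_on {-r..0} \<phi>}"

definition Cnorm :: "real \<Rightarrow> (real \<Rightarrow> real) \<Rightarrow> real" where
  "Cnorm r \<phi> = (SUP t\<in>{-r..0}. \<bar>\<phi> t\<bar>)"

definition delta :: "real \<Rightarrow> real \<Rightarrow> (real \<Rightarrow> real) \<Rightarrow> (real \<Rightarrow> real) \<Rightarrow> real" where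
  "delta a r v \<phi> = (THE u. u \<in> {0<..<r} \<and> a = integral {-u..0} (\<lambda>s. v (\<phi> s)))"

definition C_bounded_linear :: "real \<Rightarrow> ((real \<Rightarrow> real) \<Rightarrow> real) \<Rightarrow> bool" where
  "C_bounded_linear r L \<longleftrightarrow>
     (\<forall>w\<in>Cspace r. \<forall>\<psi>\<in>Cspace r. L (\<lambda>s. w s + \<psi> s) = L w + L \<psi>) \<and>
     (\<forall>w\<in>Cspace r. \<forall>c::real. L (\<lambda>s. c * w s) = c * L w) \<and>
     (\<exists>K. \<forall>w\<in>Cspace r. \<bar>L w\<bar> \<le> K * Cnorm r w)"

definition C_has_derivative ::
  "real \<Rightarrow> ((real \<Rightarrow> real) \<Rightarrow> real) \<Rightarrow> ((real \<Rightarrow> real) \<Rightarrow> real) \<Rightarrow> (real \<Rightarrow> real) \<Rightarrow> bool" where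
  "C_has_derivative r f L \<phi> \<longleftrightarrow> C_bounded_linear r L \<and>
     (\<forall>\<epsilon>>0. \<exists>\<eta>>0. \<forall>\<psi>\<in>Cspace r. Cnorm r (\<lambda>s. \<psi> s - \<phi> s) < \<eta> \<longrightarrow>
        \<bar>f \<psi> - f \<phi> - L (\<lambda>s. \<psi> s - \<phi> s)\<bar> \<le> \<epsilon> * Cnorm r (\<lambda>s. \<psi> s - \<phi> s))"

definition C_continuously_differentiable ::
  "real \<Rightarrow> ((real \<Rightarrow> real) \<Rightarrow> real) \<Rightarrow> ((real \<Rightarrow> real) \<Rightarrow> (real \<Rightarrow> real) \<Rightarrow> real) \<Rightarrow> bool" where
  "C_continuously_differentiable r f D \<longleftrightarrow>
     (\<forall>\<phi>\<in>Cspace r. C_has_derivative r f (D \<phi>) \<phi>) \<and>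
     (\<forall>\<phi>\<in>Cspace r. \<forall>\<epsilon>>0. \<exists>\<eta>>0. \<forall>\<psi>\<in>Cspace r. Cnorm r (\<lambda>s. \<psi> s - \<phi> s) < \<eta> \<longrightarrow>
        (\<forall>w\<in>Cspace r. \<bar>D \<psi> w - D \<phi> w\<bar> \<le> \<epsilon> * Cnorm r w))"

end

theory Submission
  imports Defs "HOL-Library.Landau_Symbols"
begin

text \<open>
  \<open>\<delta>(\<phi>)\<close> is the zero of \<open>u \<mapsto> \<integral>[-u,0] v(\<phi>(s)) ds - a\<close>, whose derivative in \<open>u\<close> is
  \<open>v(\<phi>(-u)) \<ge> v0 > 0\<close>. Subtracting the defining equations of \<open>\<delta>(\<psi>)\<close> and \<open>\<delta>(\<phi>)\<close> and
  applying the mean value theorem gives, for some \<open>t\<close> between \<open>-\<delta>(\<psi>)\<close> and \<open>-\<delta>(\<phi>)\<close>,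
  \<open>(\<delta>(\<psi>) - \<delta>(\<phi>)) v(\<psi>(t)) = - \<integral>[-\<delta>(\<phi>),0] (v(\<psi>(s)) - v(\<phi>(s))) ds\<close>.
  Hence \<open>v0 |\<delta>(\<psi>) - \<delta>(\<phi>)| \<le> r \<parallel>v\<circ>\<psi> - v\<circ>\<phi>\<parallel>\<close>, so \<open>\<delta>\<close> is continuous and
  \<open>\<delta>(\<psi>) - \<delta>(\<phi>) = O(\<parallel>\<psi> - \<phi>\<parallel>)\<close>. Replacing \<open>v(\<psi>(t))\<close> by \<open>v(\<phi>(-\<delta>(\<phi>)))\<close> costs \<open>o(1)\<close>, and
  replacing \<open>v\<circ>\<psi> - v\<circ>\<phi>\<close> by \<open>(v'\<circ>\<phi>)(\<psi> - \<phi>)\<close> costs \<open>o(\<parallel>\<psi> - \<phi>\<parallel>)\<close> uniformly on \<open>[-r,0]\<close>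
  because \<open>v'\<close> is uniformly continuous on compact sets; what is left is the derivative
  formula with remainder \<open>o(\<parallel>\<psi> - \<phi>\<parallel>)\<close>. Continuity of the derivative in operator norm
  follows from the continuity of \<open>\<delta>\<close>, of \<open>\<psi> \<mapsto> v'\<circ>\<psi>\<close> in the max norm, and of
  \<open>\<psi> \<mapsto> v(\<psi>(-\<delta>(\<psi>)))\<close>.
\<close>

section \<open>The space \<open>C([-r,0])\<close> with the max norm\<close>

lemma abs_le_Cnorm:
  assumes "\<phi> \<in> Cspace r" "s \<in> {-r..0}"
  shows "\<bar>\<phi> s\<bar> \<le> Cnorm r \<phi>"
proof -
  have "compact ((\<lambda>t. \<bar>\<phi> t\<bar>) ` {-r..0})"
    using assms(1) unfolding Cspace_def
    by (intro compact_continuous_image continuous_intros) auto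
  then have "bdd_above ((\<lambda>t. \<bar>\<phi> t\<bar>) ` {-r..0})"
    by (simp add: bounded_imp_bdd_above compact_imp_bounded)
  then show ?thesis
    unfolding Cnorm_def using assms(2) by (rule cSUP_upper2) auto
qed

lemma Cnorm_nonneg: "\<phi> \<in> Cspace r \<Longrightarrow> r \<ge> 0 \<Longrightarrow> 0 \<le> Cnorm r \<phi>"
  using abs_le_Cnorm[of \<phi> r 0] by auto

lemma Cnorm_le: "r \<ge> 0 \<Longrightarrow> (\<And>s. s \<in> {-r..0} \<Longrightarrow> \<bar>\<phi> s\<bar> \<le> K) \<Longrightarrow> Cnorm r \<phi> \<le> K"
  unfolding Cnorm_def by (rule cSUP_least) auto

lemma Cspace_diff: "\<phi> \<in> Cspace r \<Longrightarrow> \<psi> \<in> Cspace r \<Longrightarrow> (\<lambda>s. \<psi> s - \<phi> s) \<in> Cspace r"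
  unfolding Cspace_def by (auto intro!: continuous_intros)

lemma Cspace_mult: "\<phi> \<in> Cspace r \<Longrightarrow> \<psi> \<in> Cspace r \<Longrightarrow> (\<lambda>s. \<phi> s * \<psi> s) \<in> Cspace r"
  unfolding Cspace_def by (auto intro!: continuous_intros)

lemma Cspace_comp: "continuous_on UNIV g \<Longrightarrow> \<phi> \<in> Cspace r \<Longrightarrow> (\<lambda>s. g (\<phi> s)) \<in> Cspace r"
  unfolding Cspace_def by (auto intro: continuous_on_compose2)

lemma Cnorm_mult_le:
  assumes "h \<in> Cspace r" "w \<in> Cspace r" "r \<ge> 0"
  shows "Cnorm r (\<lambda>s. h s * w s) \<le> Cnorm r h * Cnorm r w"
proof (rule Cnorm_le[OF assms(3)])
  fix s assume "s \<in> {-r..0}"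
  then show "\<bar>h s * w s\<bar> \<le> Cnorm r h * Cnorm r w"
    unfolding abs_mult using assms abs_le_Cnorm
    by (intro mult_mono) (auto intro: order_trans[OF abs_ge_zero])
qed

lemma Cnorm_le_mult_Cnorm:
  assumes f: "f \<in> Cspace r" and h: "h \<in> Cspace r" and "r \<ge> 0" "c \<ge> 0"
    and pointwise: "\<And>s. s \<in> {-r..0} \<Longrightarrow> \<bar>f s\<bar> \<le> c * \<bar>h s\<bar>"
  shows "norm (Cnorm r f) \<le> c * norm (Cnorm r h)"
proof -
  have "Cnorm r f \<le> c * Cnorm r h"
  proof (rule Cnorm_le[OF \<open>r \<ge> 0\<close>])
    fix s assume s: "s \<in> {-r..0}"
    have "\<bar>f s\<bar> \<le> c * \<bar>h s\<bar>" by (rule pointwise[OF s])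
    also have "\<dots> \<le> c * Cnorm r h" by (rule mult_left_mono[OF abs_le_Cnorm[OF h s] \<open>c \<ge> 0\<close>])
    finally show "\<bar>f s\<bar> \<le> c * Cnorm r h" .
  qed
  then show ?thesis using Cnorm_nonneg[OF f \<open>r \<ge> 0\<close>] Cnorm_nonneg[OF h \<open>r \<ge> 0\<close>] by simp
qed

lemma Cspace_integrable_tail:
  assumes "h \<in> Cspace r" "d \<le> r"
  shows "h integrable_on {-d..0}"
proof (rule integrable_continuous_interval)
  show "continuous_on {-d..0} h"
    using assms unfolding Cspace_def by (auto elim: continuous_on_subset)
qed

lemma integral_tail_bound_Cnorm:
  assumes "h \<in> Cspace r" "0 \<le> d" "d \<le> r"
  shows "\<bar>integral {-d..0} h\<bar> \<le> r * Cnorm r h"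
proof -
  have "norm (integral {-d..0} h) \<le> Cnorm r h * (0 - - d)"
  proof (rule integral_bound)
    show "continuous_on {-d..0} h"
      using assms unfolding Cspace_def by (auto elim: continuous_on_subset)
    show "norm (h s) \<le> Cnorm r h" if "s \<in> {-d..0}" for s
      using abs_le_Cnorm[OF assms(1), of s] that assms by auto
  qed (use assms in auto)
  also have "\<dots> \<le> Cnorm r h * r"
    using assms Cnorm_nonneg by (intro mult_left_mono) auto
  finally show ?thesis by (simp add: mult.commute)
qed

lemma integral_tail_mult_bound_Cnorm:
  assumes "h \<in> Cspace r" "w \<in> Cspace r" "0 \<le> d" "d \<le> r"
  shows "\<bar>integral {-d..0} (\<lambda>s. h s * w s)\<bar> \<le> r * (Cnorm r h * Cnorm r w)"
proof -
  have "\<bar>integral {-d..0} (\<lambda>s. h s * w s)\<bar> \<le> r * Cnorm r (\<lambda>s. h s * w s)"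
    using assms by (intro integral_tail_bound_Cnorm Cspace_mult)
  also have "\<dots> \<le> r * (Cnorm r h * Cnorm r w)"
    using Cnorm_mult_le[OF assms(1,2)] assms by (intro mult_left_mono) auto
  finally show ?thesis .
qed

lemma MVT_between:
  fixes g g' :: "real \<Rightarrow> real"
  assumes "\<And>x. (g has_real_derivative g' x) (at x)"
  obtains z where "\<bar>z - x\<bar> \<le> \<bar>y - x\<bar>" "g y - g x = (y - x) * g' z"
proof (cases x y rule: linorder_cases)
  case less
  then obtain z where "x < z" "z < y" "g y - g x = (y - x) * g' z"
    using MVT2[of x y g g'] assms by blast
  then show ?thesis by (intro that[of z]) auto
next
  case greater
  then obtain z where "y < z" "z < x" "g x - g y = (x - y) * g' z"
    using MVT2[of y x g g'] assms by blast
  then show ?thesis by (intro that[of z]) (auto simp: algebra_simps)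
qed (use that in auto)

lemma integral_tail_diff_mvt:
  fixes f :: "real \<Rightarrow> real"
  assumes f: "continuous_on {-r..0} f" and "x \<in> {0..r}" "y \<in> {0..r}"
  obtains t where "t \<in> {-max x y..-min x y}"
    "integral {-x..0} f - integral {-y..0} f = (x - y) * f t"
proof -
  have mvt: "\<exists>t\<in>{-x..-y}. integral {-x..0} f - integral {-y..0} f = (x - y) * f t"
    if "0 \<le> y" "y \<le> x" "x \<le> r" for x y
  proof -
    have cont: "continuous_on {-x..0} f"
      using continuous_on_subset[OF f] \<open>x \<le> r\<close> by auto
    have "((\<lambda>u. integral {u..0} f) has_real_derivative - f t) (at t within {-x..-y})"
      if "t \<in> {-x..-y}" for t
      using integral_has_real_derivative'[OF cont, of t] that \<open>0 \<le> y\<close>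
      by (auto intro: has_field_derivative_subset)
    then obtain t where "t \<in> {-x..-y}" "integral {-y..0} f - integral {-x..0} f = - f t * (- y - - x)"
      using mvt_very_simple[of "-x" "-y" "\<lambda>u. integral {u..0} f" "\<lambda>t h. - f t * h"] \<open>y \<le> x\<close>
      by (auto simp: has_real_derivative_iff_has_vector_derivative has_vector_derivative_def
          mult.commute)
    then show ?thesis by (intro bexI[of _ t]) (auto simp: algebra_simps)
  qed
  show ?thesis
  proof (cases "y \<le> x")
    case True
    then show ?thesis using mvt[of y x] assms that by auto
  next
    case False
    then obtain t where "t \<in> {-y..-x}" "integral {-y..0} f - integral {-x..0} f = (y - x) * f t"
      using mvt[of x y] assms by auto
    then show ?thesis using that[of t] False by (auto simp: algebra_simps)
  qed
qed

section \<open>Limits in the max norm\<close>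

text \<open>Along this filter the condition in \<open>C_has_derivative\<close> is a little-o estimate, and
  the continuity condition in \<open>C_continuously_differentiable\<close> an eventual bound.\<close>

definition C_nhds :: "real \<Rightarrow> (real \<Rightarrow> real) \<Rightarrow> (real \<Rightarrow> real) filter" where
  "C_nhds r \<phi> = (INF \<epsilon>\<in>{0<..}. principal {\<psi> \<in> Cspace r. Cnorm r (\<lambda>s. \<psi> s - \<phi> s) < \<epsilon>})"

lemma eventually_C_nhds:
  "eventually P (C_nhds r \<phi>) \<longleftrightarrow>
     (\<exists>\<epsilon>>0. \<forall>\<psi>\<in>Cspace r. Cnorm r (\<lambda>s. \<psi> s - \<phi> s) < \<epsilon> \<longrightarrow> P \<psi>)"
  unfolding C_nhds_def
  by (subst eventually_INF_base) (auto simp: eventually_principal intro: bexI[of _ "min _ _"])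

lemma eventually_Cspace_C_nhds: "eventually (\<lambda>\<psi>. \<psi> \<in> Cspace r) (C_nhds r \<phi>)"
  unfolding eventually_C_nhds by (auto intro: exI[of _ 1])

lemma C_has_derivative_if_smallo:
  assumes "r \<ge> 0" "\<phi> \<in> Cspace r" "C_bounded_linear r L"
    and "(\<lambda>\<psi>. f \<psi> - f \<phi> - L (\<lambda>s. \<psi> s - \<phi> s)) \<in> o[C_nhds r \<phi>](\<lambda>\<psi>. Cnorm r (\<lambda>s. \<psi> s - \<phi> s))"
  shows "C_has_derivative r f L \<phi>"
  unfolding C_has_derivative_def
proof (intro conjI allI impI assms(3))
  fix \<epsilon> :: real assume "\<epsilon> > 0"
  with assms(4) have "eventually (\<lambda>\<psi>.
      \<bar>f \<psi> - f \<phi> - L (\<lambda>s. \<psi> s - \<phi> s)\<bar> \<le> \<epsilon> * \<bar>Cnorm r (\<lambda>s. \<psi> s - \<phi> s)\<bar>) (C_nhds r \<phi>)"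
    by (auto dest: landau_o.smallD)
  then show "\<exists>\<eta>>0. \<forall>\<psi>\<in>Cspace r. Cnorm r (\<lambda>s. \<psi> s - \<phi> s) < \<eta> \<longrightarrow>
      \<bar>f \<psi> - f \<phi> - L (\<lambda>s. \<psi> s - \<phi> s)\<bar> \<le> \<epsilon> * Cnorm r (\<lambda>s. \<psi> s - \<phi> s)"
    unfolding eventually_C_nhds using assms(1,2) Cnorm_nonneg[OF Cspace_diff] by (metis abs_of_nonneg)
qed

lemma C_operator_continuous_if_bound:
  assumes "r \<ge> 0" "(B \<longlongrightarrow> 0) (C_nhds r \<phi>)"
    and "eventually (\<lambda>\<psi>. \<forall>w\<in>Cspace r. \<bar>D \<psi> w - D \<phi> w\<bar> \<le> B \<psi> * Cnorm r w) (C_nhds r \<phi>)"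
  shows "\<forall>\<epsilon>>0. \<exists>\<eta>>0. \<forall>\<psi>\<in>Cspace r. Cnorm r (\<lambda>s. \<psi> s - \<phi> s) < \<eta> \<longrightarrow>
           (\<forall>w\<in>Cspace r. \<bar>D \<psi> w - D \<phi> w\<bar> \<le> \<epsilon> * Cnorm r w)"
proof (intro allI impI)
  fix \<epsilon> :: real assume "\<epsilon> > 0"
  with assms(2) have "eventually (\<lambda>\<psi>. \<bar>B \<psi>\<bar> < \<epsilon>) (C_nhds r \<phi>)"
    by (auto simp: tendsto_iff dist_real_def)
  with assms(3) have "eventually (\<lambda>\<psi>. \<forall>w\<in>Cspace r. \<bar>D \<psi> w - D \<phi> w\<bar> \<le> \<epsilon> * Cnorm r w) (C_nhds r \<phi>)"
  proof eventually_elim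
    case (elim \<psi>)
    then show ?case
      using Cnorm_nonneg[OF _ assms(1)]
      by (meson abs_ge_self less_imp_le mult_right_mono order_trans)
  qed
  then show "\<exists>\<eta>>0. \<forall>\<psi>\<in>Cspace r. Cnorm r (\<lambda>s. \<psi> s - \<phi> s) < \<eta> \<longrightarrow>
           (\<forall>w\<in>Cspace r. \<bar>D \<psi> w - D \<phi> w\<bar> \<le> \<epsilon> * Cnorm r w)"
    unfolding eventually_C_nhds .
qed

lemma eventually_uniformly_close_C_nhds:
  fixes g :: "real \<Rightarrow> real"
  assumes "continuous_on UNIV g" "\<phi> \<in> Cspace r" "\<epsilon> > 0"
  shows "eventually (\<lambda>\<psi>. \<forall>s\<in>{-r..0}. \<forall>z. \<bar>z - \<phi> s\<bar> \<le> \<bar>\<psi> s - \<phi> s\<bar> \<longrightarrow> \<bar>g z - g (\<phi> s)\<bar> < \<epsilon>)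
           (C_nhds r \<phi>)"
proof -
  define B where "B = Cnorm r \<phi>"
  have "uniformly_continuous_on {-B-1..B+1} g"
    by (rule compact_uniformly_continuous[OF continuous_on_subset[OF assms(1)]]) auto
  then obtain \<rho> where \<rho>: "\<rho> > 0"
    "\<And>x y. x \<in> {-B-1..B+1} \<Longrightarrow> y \<in> {-B-1..B+1} \<Longrightarrow> \<bar>y - x\<bar> < \<rho> \<Longrightarrow> \<bar>g y - g x\<bar> < \<epsilon>"
    using assms(3) unfolding uniformly_continuous_on_def dist_real_def by metis
  show ?thesis unfolding eventually_C_nhds
  proof (intro exI[of _ "min 1 \<rho>"] conjI ballI allI impI)
    fix \<psi> s z
    assume \<psi>: "\<psi> \<in> Cspace r" "Cnorm r (\<lambda>s. \<psi> s - \<phi> s) < min 1 \<rho>" and s: "s \<in> {-r..0}"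
      and z: "\<bar>z - \<phi> s\<bar> \<le> \<bar>\<psi> s - \<phi> s\<bar>"
    have "\<bar>\<psi> s - \<phi> s\<bar> < min 1 \<rho>"
      using abs_le_Cnorm[OF Cspace_diff[OF assms(2) \<psi>(1)] s] \<psi>(2) by simp
    moreover have "\<bar>\<phi> s\<bar> \<le> B" using abs_le_Cnorm[OF assms(2) s] B_def by simp
    ultimately show "\<bar>g z - g (\<phi> s)\<bar> < \<epsilon>" using z by (intro \<rho>(2)) auto
  qed (use \<rho> in auto)
qed

lemma tendsto_Cnorm_comp_diff_C_nhds:
  assumes "continuous_on UNIV g" "\<phi> \<in> Cspace r" "r \<ge> 0"
  shows "((\<lambda>\<psi>. Cnorm r (\<lambda>s. g (\<psi> s) - g (\<phi> s))) \<longlongrightarrow> 0) (C_nhds r \<phi>)"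
proof (rule tendstoI)
  fix \<epsilon> :: real assume "\<epsilon> > 0"
  then have "\<epsilon> / 2 > 0" by simp
  from eventually_uniformly_close_C_nhds[OF assms(1,2) this] eventually_Cspace_C_nhds
  show "eventually (\<lambda>\<psi>. dist (Cnorm r (\<lambda>s. g (\<psi> s) - g (\<phi> s))) 0 < \<epsilon>) (C_nhds r \<phi>)"
  proof eventually_elim
    case (elim \<psi>)
    have "Cnorm r (\<lambda>s. g (\<psi> s) - g (\<phi> s)) \<le> \<epsilon> / 2"
      using elim by (intro Cnorm_le[OF assms(3)]) (auto intro: less_imp_le)
    moreover have "0 \<le> Cnorm r (\<lambda>s. g (\<psi> s) - g (\<phi> s))"
      using Cnorm_nonneg[OF Cspace_diff[OF Cspace_comp[OF assms(1,2)] Cspace_comp[OF assms(1) elim(2)]]]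
        assms(3) .
    ultimately show ?case using \<open>\<epsilon> > 0\<close> by (simp add: dist_real_def)
  qed
qed

lemma tendsto_comp_eval_C_nhds:
  fixes g :: "real \<Rightarrow> real"
  assumes g: "continuous_on UNIV g" and \<phi>: "\<phi> \<in> Cspace r" and "r \<ge> 0"
    and \<tau>: "(\<tau> \<longlongrightarrow> t) (C_nhds r \<phi>)" "t \<in> {-r..0}" "eventually (\<lambda>\<psi>. \<tau> \<psi> \<in> {-r..0}) (C_nhds r \<phi>)"
  shows "((\<lambda>\<psi>. g (\<psi> (\<tau> \<psi>))) \<longlongrightarrow> g (\<phi> t)) (C_nhds r \<phi>)"
proof (rule Lim_transform)
  show "((\<lambda>\<psi>. g (\<phi> (\<tau> \<psi>))) \<longlongrightarrow> g (\<phi> t)) (C_nhds r \<phi>)"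
    using Cspace_comp[OF g \<phi>] \<tau> unfolding Cspace_def mem_Collect_eq by (rule continuous_on_tendsto_compose)
  show "((\<lambda>\<psi>. g (\<psi> (\<tau> \<psi>)) - g (\<phi> (\<tau> \<psi>))) \<longlongrightarrow> 0) (C_nhds r \<phi>)"
  proof (rule Lim_null_comparison[OF _ tendsto_Cnorm_comp_diff_C_nhds[OF g \<phi> \<open>r \<ge> 0\<close>]])
    from \<tau>(3) eventually_Cspace_C_nhds
    show "eventually (\<lambda>\<psi>. norm (g (\<psi> (\<tau> \<psi>)) - g (\<phi> (\<tau> \<psi>))) \<le> Cnorm r (\<lambda>s. g (\<psi> s) - g (\<phi> s)))
            (C_nhds r \<phi>)"
    proof eventually_elim
      case (elim \<psi>)
      then show ?case
        using abs_le_Cnorm[OF Cspace_diff[OF Cspace_comp[OF g \<phi>] Cspace_comp[OF g elim(2)]]] by auto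
    qed
  qed
qed

lemma eventually_linearization_C_nhds:
  fixes g g' :: "real \<Rightarrow> real"
  assumes g: "\<And>x. (g has_real_derivative g' x) (at x)" and g': "continuous_on UNIV g'"
    and \<phi>: "\<phi> \<in> Cspace r" and "\<epsilon> > 0"
  shows "eventually (\<lambda>\<psi>. \<forall>s\<in>{-r..0}.
           \<bar>g (\<psi> s) - g (\<phi> s) - g' (\<phi> s) * (\<psi> s - \<phi> s)\<bar> \<le> \<epsilon> * \<bar>\<psi> s - \<phi> s\<bar>) (C_nhds r \<phi>)"
  using eventually_uniformly_close_C_nhds[OF g' \<phi> \<open>\<epsilon> > 0\<close>]
proof eventually_elim
  case (elim \<psi>)
  show ?case
  proof
    fix s assume s: "s \<in> {-r..0}"
    obtain z where z: "\<bar>z - \<phi> s\<bar> \<le> \<bar>\<psi> s - \<phi> s\<bar>" "g (\<psi> s) - g (\<phi> s) = (\<psi> s - \<phi> s) * g' z"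
      using MVT_between[OF g] by metis
    have "\<bar>g (\<psi> s) - g (\<phi> s) - g' (\<phi> s) * (\<psi> s - \<phi> s)\<bar> = \<bar>\<psi> s - \<phi> s\<bar> * \<bar>g' z - g' (\<phi> s)\<bar>"
      unfolding z(2) abs_mult[symmetric] by (simp add: algebra_simps)
    also have "\<dots> \<le> \<bar>\<psi> s - \<phi> s\<bar> * \<epsilon>"
      using elim s z(1) by (intro mult_left_mono) (auto intro: less_imp_le)
    finally show "\<bar>g (\<psi> s) - g (\<phi> s) - g' (\<phi> s) * (\<psi> s - \<phi> s)\<bar> \<le> \<epsilon> * \<bar>\<psi> s - \<phi> s\<bar>"
      by (simp add: mult.commute)
  qed
qed

lemma Cnorm_linearization_smallo:
  fixes g g' :: "real \<Rightarrow> real"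
  assumes g: "\<And>x. (g has_real_derivative g' x) (at x)" and g': "continuous_on UNIV g'"
    and \<phi>: "\<phi> \<in> Cspace r" and "r \<ge> 0"
  shows "(\<lambda>\<psi>. Cnorm r (\<lambda>s. g (\<psi> s) - g (\<phi> s) - g' (\<phi> s) * (\<psi> s - \<phi> s)))
           \<in> o[C_nhds r \<phi>](\<lambda>\<psi>. Cnorm r (\<lambda>s. \<psi> s - \<phi> s))"
proof (rule landau_o.smallI)
  fix \<epsilon> :: real assume "\<epsilon> > 0"
  have g_cont: "continuous_on UNIV g" by (rule DERIV_continuous_on) (rule g)
  from eventually_linearization_C_nhds[OF g g' \<phi> \<open>\<epsilon> > 0\<close>] eventually_Cspace_C_nhds
  show "eventually (\<lambda>\<psi>. norm (Cnorm r (\<lambda>s. g (\<psi> s) - g (\<phi> s) - g' (\<phi> s) * (\<psi> s - \<phi> s)))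
          \<le> \<epsilon> * norm (Cnorm r (\<lambda>s. \<psi> s - \<phi> s))) (C_nhds r \<phi>)"
  proof eventually_elim
    case (elim \<psi>)
    have "(\<lambda>s. g (\<psi> s) - g (\<phi> s) - g' (\<phi> s) * (\<psi> s - \<phi> s)) \<in> Cspace r"
      using Cspace_comp[OF g_cont elim(2)] Cspace_comp[OF g_cont \<phi>] Cspace_comp[OF g' \<phi>] \<phi> elim(2)
      by (intro Cspace_diff Cspace_mult)
    with elim(1) show ?case
      using Cspace_diff[OF \<phi> elim(2)] \<open>r \<ge> 0\<close> \<open>\<epsilon> > 0\<close> by (intro Cnorm_le_mult_Cnorm) auto
  qed
qed

lemma Cnorm_comp_diff_bigo:
  fixes g g' :: "real \<Rightarrow> real"
  assumes g: "\<And>x. (g has_real_derivative g' x) (at x)" and g': "continuous_on UNIV g'"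
    and \<phi>: "\<phi> \<in> Cspace r" and "r \<ge> 0"
  shows "(\<lambda>\<psi>. Cnorm r (\<lambda>s. g (\<psi> s) - g (\<phi> s))) \<in> O[C_nhds r \<phi>](\<lambda>\<psi>. Cnorm r (\<lambda>s. \<psi> s - \<phi> s))"
proof (rule bigoI)
  define M where "M = Cnorm r (\<lambda>s. g' (\<phi> s)) + 1"
  have g_cont: "continuous_on UNIV g" by (rule DERIV_continuous_on) (rule g)
  from eventually_linearization_C_nhds[OF g g' \<phi> zero_less_one] eventually_Cspace_C_nhds
  show "eventually (\<lambda>\<psi>. norm (Cnorm r (\<lambda>s. g (\<psi> s) - g (\<phi> s)))
          \<le> M * norm (Cnorm r (\<lambda>s. \<psi> s - \<phi> s))) (C_nhds r \<phi>)"
  proof eventually_elim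
    case (elim \<psi>)
    have "\<bar>g (\<psi> s) - g (\<phi> s)\<bar> \<le> M * \<bar>\<psi> s - \<phi> s\<bar>" if s: "s \<in> {-r..0}" for s
    proof -
      have "\<bar>g (\<psi> s) - g (\<phi> s) - g' (\<phi> s) * (\<psi> s - \<phi> s)\<bar> \<le> \<bar>\<psi> s - \<phi> s\<bar>"
        using elim(1) s by auto
      then have "\<bar>g (\<psi> s) - g (\<phi> s)\<bar> \<le> (1 + \<bar>g' (\<phi> s)\<bar>) * \<bar>\<psi> s - \<phi> s\<bar>"
        using abs_triangle_ineq[of "g (\<psi> s) - g (\<phi> s) - g' (\<phi> s) * (\<psi> s - \<phi> s)" "g' (\<phi> s) * (\<psi> s - \<phi> s)"]
        by (simp add: distrib_right abs_mult)
      also have "\<dots> \<le> M * \<bar>\<psi> s - \<phi> s\<bar>"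
        unfolding M_def using abs_le_Cnorm[OF Cspace_comp[OF g' \<phi>] s] by (intro mult_right_mono) auto
      finally show ?thesis .
    qed
    then show ?case
      using Cspace_comp[OF g_cont elim(2)] Cspace_comp[OF g_cont \<phi>] Cspace_diff[OF \<phi> elim(2)]
        \<phi> elim(2) \<open>r \<ge> 0\<close> Cnorm_nonneg[OF Cspace_comp[OF g' \<phi>] \<open>r \<ge> 0\<close>]
      by (intro Cnorm_le_mult_Cnorm Cspace_diff) (auto simp: M_def)
  qed
qed

section \<open>The delay functional\<close>

locale delay_functional =
  fixes a v0 r :: real and v v' :: "real \<Rightarrow> real"
  assumes a_pos: "a > 0" and v0_pos: "v0 > 0" and v_ge: "\<And>x. v x \<ge> v0"
    and v_deriv: "\<And>x. (v has_real_derivative v' x) (at x)"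
    and v'_cont: "continuous_on UNIV v'"
    and r_gt: "r > a / v0"
begin

abbreviation \<delta> :: "(real \<Rightarrow> real) \<Rightarrow> real" where
  "\<delta> \<equiv> delta a r v"

lemma r_pos: "r > 0"
  using a_pos v0_pos r_gt by (meson divide_pos_pos less_trans)

lemma v_pos: "v x > 0"
  using v_ge v0_pos by (rule order.strict_trans2[rotated])

lemma v_cont: "continuous_on UNIV v"
  by (rule DERIV_continuous_on) (rule v_deriv)

lemma v_comp_continuous: "\<phi> \<in> Cspace r \<Longrightarrow> continuous_on {-r..0} (\<lambda>s. v (\<phi> s))"
  using Cspace_comp[OF v_cont] by (simp add: Cspace_def)

lemma delta_eqI:
  assumes \<phi>: "\<phi> \<in> Cspace r" and u: "u \<in> {0<..<r}" "integral {-u..0} (\<lambda>s. v (\<phi> s)) = a"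
  shows "\<delta> \<phi> = u"
  unfolding delta_def
proof (rule the_equality)
  show "u \<in> {0<..<r} \<and> a = integral {-u..0} (\<lambda>s. v (\<phi> s))" using u by simp
  fix u' assume u': "u' \<in> {0<..<r} \<and> a = integral {-u'..0} (\<lambda>s. v (\<phi> s))"
  obtain t where "integral {-u'..0} (\<lambda>s. v (\<phi> s)) - integral {-u..0} (\<lambda>s. v (\<phi> s)) = (u' - u) * v (\<phi> t)"
    using integral_tail_diff_mvt[OF v_comp_continuous[OF \<phi>], of u' u] u u' by auto
  with u u' v_pos[of "\<phi> t"] show "u' = u" by simp
qed

lemma delta_exists:
  assumes \<phi>: "\<phi> \<in> Cspace r"
  shows "\<exists>u\<in>{0<..<r}. integral {-u..0} (\<lambda>s. v (\<phi> s)) = a"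
proof -
  define G where "G u = integral {-u..0} (\<lambda>s. v (\<phi> s))" for u
  have "continuous_on {-r..0} (\<lambda>x. integral {x..0} (\<lambda>s. v (\<phi> s)))"
    by (rule indefinite_integral_continuous_1'[OF integrable_continuous_interval[OF v_comp_continuous[OF \<phi>]]])
  then have G_cont: "continuous_on {0..r} G"
    unfolding G_def by (rule continuous_on_compose2[of _ _ _ uminus]) (auto intro: continuous_intros)
  have G0: "G 0 = 0" unfolding G_def by simp
  obtain t where "G r - G 0 = (r - 0) * v (\<phi> t)"
    using integral_tail_diff_mvt[OF v_comp_continuous[OF \<phi>], of r 0] r_pos unfolding G_def by auto
  then have "G r \<ge> r * v0" using v_ge[of "\<phi> t"] r_pos G0 by simp
  moreover have "r * v0 > a" using r_gt v0_pos by (simp add: divide_less_eq mult.commute)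
  ultimately have Gr: "G r > a" by linarith
  then obtain u where u: "0 \<le> u" "u \<le> r" "G u = a"
    using IVT'[of G 0 a r, OF _ _ _ G_cont] G0 a_pos r_pos by auto
  moreover have "u \<noteq> 0" "u \<noteq> r" using u G0 Gr a_pos by auto
  ultimately show ?thesis unfolding G_def by auto
qed

lemma delta_mem: "\<phi> \<in> Cspace r \<Longrightarrow> \<delta> \<phi> \<in> {0<..<r}"
  using delta_exists delta_eqI by blast

lemma integral_delta: "\<phi> \<in> Cspace r \<Longrightarrow> integral {-\<delta> \<phi>..0} (\<lambda>s. v (\<phi> s)) = a"
  using delta_exists delta_eqI by blast

lemma delta_diff_mvt:
  assumes \<phi>: "\<phi> \<in> Cspace r" and \<psi>: "\<psi> \<in> Cspace r"
  shows "\<exists>t\<in>{-max (\<delta> \<psi>) (\<delta> \<phi>)..-min (\<delta> \<psi>) (\<delta> \<phi>)}.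
           (\<delta> \<psi> - \<delta> \<phi>) * v (\<psi> t) = - integral {-\<delta> \<phi>..0} (\<lambda>s. v (\<psi> s) - v (\<phi> s))"
proof -
  have d: "\<delta> \<phi> \<in> {0<..<r}" "\<delta> \<psi> \<in> {0<..<r}" using delta_mem \<phi> \<psi> by auto
  obtain t where t: "t \<in> {-max (\<delta> \<psi>) (\<delta> \<phi>)..-min (\<delta> \<psi>) (\<delta> \<phi>)}"
    "integral {-\<delta> \<psi>..0} (\<lambda>s. v (\<psi> s)) - integral {-\<delta> \<phi>..0} (\<lambda>s. v (\<psi> s)) = (\<delta> \<psi> - \<delta> \<phi>) * v (\<psi> t)"
    using integral_tail_diff_mvt[OF v_comp_continuous[OF \<psi>], of "\<delta> \<psi>" "\<delta> \<phi>"] d by auto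
  have "integral {-\<delta> \<phi>..0} (\<lambda>s. v (\<psi> s) - v (\<phi> s))
      = integral {-\<delta> \<phi>..0} (\<lambda>s. v (\<psi> s)) - integral {-\<delta> \<phi>..0} (\<lambda>s. v (\<phi> s))"
    using d Cspace_comp[OF v_cont] \<phi> \<psi> by (intro integral_diff Cspace_integrable_tail) auto
  with t integral_delta[OF \<phi>] integral_delta[OF \<psi>] show ?thesis by auto
qed

lemma delta_diff_le:
  assumes \<phi>: "\<phi> \<in> Cspace r" and \<psi>: "\<psi> \<in> Cspace r"
  shows "\<bar>\<delta> \<psi> - \<delta> \<phi>\<bar> \<le> r / v0 * Cnorm r (\<lambda>s. v (\<psi> s) - v (\<phi> s))"
proof -
  obtain t where t: "(\<delta> \<psi> - \<delta> \<phi>) * v (\<psi> t) = - integral {-\<delta> \<phi>..0} (\<lambda>s. v (\<psi> s) - v (\<phi> s))"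
    using delta_diff_mvt[OF \<phi> \<psi>] by blast
  have "v0 * \<bar>\<delta> \<psi> - \<delta> \<phi>\<bar> \<le> \<bar>(\<delta> \<psi> - \<delta> \<phi>) * v (\<psi> t)\<bar>"
    using mult_right_mono[OF v_ge[of "\<psi> t"] abs_ge_zero, of "\<delta> \<psi> - \<delta> \<phi>"] v_pos[of "\<psi> t"]
    by (simp add: abs_mult mult.commute)
  also have "\<dots> \<le> r * Cnorm r (\<lambda>s. v (\<psi> s) - v (\<phi> s))"
    unfolding t abs_minus_cancel using delta_mem[OF \<phi>] Cspace_comp[OF v_cont] \<phi> \<psi>
    by (intro integral_tail_bound_Cnorm Cspace_diff) auto
  finally show ?thesis using v0_pos by (simp add: field_simps)
qed

lemma tendsto_delta:
  assumes \<phi>: "\<phi> \<in> Cspace r"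
  shows "(\<delta> \<longlongrightarrow> \<delta> \<phi>) (C_nhds r \<phi>)"
proof (rule LIM_zero_cancel, rule Lim_null_comparison)
  show "eventually (\<lambda>\<psi>. norm (\<delta> \<psi> - \<delta> \<phi>) \<le> r / v0 * Cnorm r (\<lambda>s. v (\<psi> s) - v (\<phi> s))) (C_nhds r \<phi>)"
    using eventually_Cspace_C_nhds by (rule eventually_mono) (use delta_diff_le[OF \<phi>] in simp)
  show "((\<lambda>\<psi>. r / v0 * Cnorm r (\<lambda>s. v (\<psi> s) - v (\<phi> s))) \<longlongrightarrow> 0) (C_nhds r \<phi>)"
    using r_pos by (intro tendsto_mult_right_zero tendsto_Cnorm_comp_diff_C_nhds[OF v_cont \<phi>]) simp
qed

lemma delta_diff_bigo:
  assumes \<phi>: "\<phi> \<in> Cspace r"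
  shows "(\<lambda>\<psi>. \<delta> \<psi> - \<delta> \<phi>) \<in> O[C_nhds r \<phi>](\<lambda>\<psi>. Cnorm r (\<lambda>s. \<psi> s - \<phi> s))"
proof (rule landau_o.big_trans)
  show "(\<lambda>\<psi>. \<delta> \<psi> - \<delta> \<phi>) \<in> O[C_nhds r \<phi>](\<lambda>\<psi>. Cnorm r (\<lambda>s. v (\<psi> s) - v (\<phi> s)))"
  proof (rule bigoI)
    show "eventually (\<lambda>\<psi>. norm (\<delta> \<psi> - \<delta> \<phi>) \<le> r / v0 * norm (Cnorm r (\<lambda>s. v (\<psi> s) - v (\<phi> s))))
        (C_nhds r \<phi>)"
      using eventually_Cspace_C_nhds
    proof (rule eventually_mono)
      fix \<psi> assume \<psi>: "\<psi> \<in> Cspace r"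
      have "0 \<le> Cnorm r (\<lambda>s. v (\<psi> s) - v (\<phi> s))"
        using Cspace_comp[OF v_cont] \<phi> \<psi> r_pos by (intro Cnorm_nonneg Cspace_diff) auto
      with delta_diff_le[OF \<phi> \<psi>]
      show "norm (\<delta> \<psi> - \<delta> \<phi>) \<le> r / v0 * norm (Cnorm r (\<lambda>s. v (\<psi> s) - v (\<phi> s)))" by simp
    qed
  qed
  show "(\<lambda>\<psi>. Cnorm r (\<lambda>s. v (\<psi> s) - v (\<phi> s))) \<in> O[C_nhds r \<phi>](\<lambda>\<psi>. Cnorm r (\<lambda>s. \<psi> s - \<phi> s))"
    using Cnorm_comp_diff_bigo[OF v_deriv v'_cont \<phi>] r_pos by simp
qed

lemma tendsto_v_between_delays:
  assumes \<phi>: "\<phi> \<in> Cspace r"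
    and \<tau>: "eventually (\<lambda>\<psi>. \<tau> \<psi> \<in> {-max (\<delta> \<psi>) (\<delta> \<phi>)..-min (\<delta> \<psi>) (\<delta> \<phi>)}) (C_nhds r \<phi>)"
  shows "((\<lambda>\<psi>. v (\<psi> (\<tau> \<psi>))) \<longlongrightarrow> v (\<phi> (- \<delta> \<phi>))) (C_nhds r \<phi>)"
proof (rule tendsto_comp_eval_C_nhds[OF v_cont \<phi>])
  show "(\<tau> \<longlongrightarrow> - \<delta> \<phi>) (C_nhds r \<phi>)"
  proof (rule LIM_zero_cancel, rule Lim_null_comparison)
    show "eventually (\<lambda>\<psi>. norm (\<tau> \<psi> - - \<delta> \<phi>) \<le> \<bar>\<delta> \<psi> - \<delta> \<phi>\<bar>) (C_nhds r \<phi>)"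
      using \<tau> by eventually_elim auto
    show "((\<lambda>\<psi>. \<bar>\<delta> \<psi> - \<delta> \<phi>\<bar>) \<longlongrightarrow> 0) (C_nhds r \<phi>)"
      using tendsto_rabs_zero[OF LIM_zero[OF tendsto_delta[OF \<phi>]]] .
  qed
  show "eventually (\<lambda>\<psi>. \<tau> \<psi> \<in> {-r..0}) (C_nhds r \<phi>)"
    using \<tau> eventually_Cspace_C_nhds
  proof eventually_elim
    case (elim \<psi>)
    then show ?case using delta_mem[OF \<phi>] delta_mem[OF elim(2)] by auto
  qed
qed (use delta_mem[OF \<phi>] r_pos in auto)

definition delta_deriv :: "(real \<Rightarrow> real) \<Rightarrow> (real \<Rightarrow> real) \<Rightarrow> real" where
  "delta_deriv \<phi> w = - integral {- \<delta> \<phi>..0} (\<lambda>s. v' (\<phi> s) * w s) / v (\<phi> (- \<delta> \<phi>))"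

lemma abs_delay_integral_le:
  assumes "\<phi> \<in> Cspace r" "w \<in> Cspace r"
  shows "\<bar>integral {- \<delta> \<phi>..0} (\<lambda>s. v' (\<phi> s) * w s)\<bar> \<le> r * Cnorm r (\<lambda>s. v' (\<phi> s)) * Cnorm r w"
  using integral_tail_mult_bound_Cnorm[OF Cspace_comp[OF v'_cont assms(1)] assms(2)] delta_mem[OF assms(1)]
  by (simp add: mult.assoc)

lemma delta_deriv_bounded_linear:
  assumes \<phi>: "\<phi> \<in> Cspace r"
  shows "C_bounded_linear r (delta_deriv \<phi>)"
  unfolding C_bounded_linear_def
proof (intro conjI ballI allI exI)
  have int: "(\<lambda>s. v' (\<phi> s) * w s) integrable_on {- \<delta> \<phi>..0}" if "w \<in> Cspace r" for w
    using Cspace_integrable_tail[OF Cspace_mult[OF Cspace_comp[OF v'_cont \<phi>] that]] delta_mem[OF \<phi>]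
    by simp
  fix w \<psi> assume "w \<in> Cspace r" "\<psi> \<in> Cspace r"
  from integral_add[OF int[OF this(1)] int[OF this(2)]]
  show "delta_deriv \<phi> (\<lambda>s. w s + \<psi> s) = delta_deriv \<phi> w + delta_deriv \<phi> \<psi>"
    unfolding delta_deriv_def distrib_left by (simp add: diff_divide_distrib)
next
  fix w :: "real \<Rightarrow> real" and c :: real
  show "delta_deriv \<phi> (\<lambda>s. c * w s) = c * delta_deriv \<phi> w"
    unfolding delta_deriv_def by (simp add: mult.left_commute)
next
  fix w assume w: "w \<in> Cspace r"
  have "v0 \<le> v (\<phi> (- \<delta> \<phi>))" by (rule v_ge)
  then show "\<bar>delta_deriv \<phi> w\<bar> \<le> r * Cnorm r (\<lambda>s. v' (\<phi> s)) / v0 * Cnorm r w"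
    using abs_delay_integral_le[OF \<phi> w] v0_pos Cnorm_nonneg[OF w] r_pos
      Cnorm_nonneg[OF Cspace_comp[OF v'_cont \<phi>]]
    unfolding delta_deriv_def abs_divide abs_minus_cancel
    by (simp add: frac_le)
qed

lemma delta_remainder_eq:
  assumes \<phi>: "\<phi> \<in> Cspace r" and \<psi>: "\<psi> \<in> Cspace r"
    and t: "(\<delta> \<psi> - \<delta> \<phi>) * v (\<psi> t) = - integral {-\<delta> \<phi>..0} (\<lambda>s. v (\<psi> s) - v (\<phi> s))"
  defines "c \<equiv> v (\<phi> (- \<delta> \<phi>))"
  shows "\<delta> \<psi> - \<delta> \<phi> - delta_deriv \<phi> (\<lambda>s. \<psi> s - \<phi> s)
     = - 1 / c * ((\<delta> \<psi> - \<delta> \<phi>) * (v (\<psi> t) - c)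
          + integral {-\<delta> \<phi>..0} (\<lambda>s. v (\<psi> s) - v (\<phi> s) - v' (\<phi> s) * (\<psi> s - \<phi> s)))"
proof -
  define L where "L = integral {-\<delta> \<phi>..0} (\<lambda>s. v' (\<phi> s) * (\<psi> s - \<phi> s))"
  have "c \<noteq> 0" unfolding c_def using v_pos[of "\<phi> (- \<delta> \<phi>)"] by simp
  have "(\<lambda>s. v (\<psi> s) - v (\<phi> s)) \<in> Cspace r" and "(\<lambda>s. v' (\<phi> s) * (\<psi> s - \<phi> s)) \<in> Cspace r"
    using Cspace_comp[OF v_cont] Cspace_mult[OF Cspace_comp[OF v'_cont \<phi>] Cspace_diff[OF \<phi> \<psi>]] \<phi> \<psi>
    by (auto intro: Cspace_diff)
  then have "integral {-\<delta> \<phi>..0} (\<lambda>s. v (\<psi> s) - v (\<phi> s) - v' (\<phi> s) * (\<psi> s - \<phi> s))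
      = integral {-\<delta> \<phi>..0} (\<lambda>s. v (\<psi> s) - v (\<phi> s)) - L"
    unfolding L_def using delta_mem[OF \<phi>] by (intro integral_diff Cspace_integrable_tail) auto
  then have "(\<delta> \<psi> - \<delta> \<phi>) * (v (\<psi> t) - c)
      + integral {-\<delta> \<phi>..0} (\<lambda>s. v (\<psi> s) - v (\<phi> s) - v' (\<phi> s) * (\<psi> s - \<phi> s))
      = - ((\<delta> \<psi> - \<delta> \<phi>) * c + L)"
    using t by (simp add: algebra_simps)
  then have "- 1 / c * ((\<delta> \<psi> - \<delta> \<phi>) * (v (\<psi> t) - c)
          + integral {-\<delta> \<phi>..0} (\<lambda>s. v (\<psi> s) - v (\<phi> s) - v' (\<phi> s) * (\<psi> s - \<phi> s)))
      = ((\<delta> \<psi> - \<delta> \<phi>) * c + L) / c"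
    by (simp add: minus_divide_left[symmetric] del: minus_add_distrib)
  also have "\<dots> = \<delta> \<psi> - \<delta> \<phi> + L / c"
    by (simp only: add_divide_distrib nonzero_mult_div_cancel_right[OF \<open>c \<noteq> 0\<close>])
  also have "\<dots> = \<delta> \<psi> - \<delta> \<phi> - delta_deriv \<phi> (\<lambda>s. \<psi> s - \<phi> s)"
    unfolding delta_deriv_def L_def c_def by simp
  finally show ?thesis by simp
qed

lemma integral_linearization_smallo:
  assumes \<phi>: "\<phi> \<in> Cspace r"
  shows "(\<lambda>\<psi>. integral {-\<delta> \<phi>..0} (\<lambda>s. v (\<psi> s) - v (\<phi> s) - v' (\<phi> s) * (\<psi> s - \<phi> s)))
           \<in> o[C_nhds r \<phi>](\<lambda>\<psi>. Cnorm r (\<lambda>s. \<psi> s - \<phi> s))"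
proof (rule landau_o.big_small_trans)
  let ?rem = "\<lambda>\<psi>. Cnorm r (\<lambda>s. v (\<psi> s) - v (\<phi> s) - v' (\<phi> s) * (\<psi> s - \<phi> s))"
  show "?rem \<in> o[C_nhds r \<phi>](\<lambda>\<psi>. Cnorm r (\<lambda>s. \<psi> s - \<phi> s))"
    by (rule Cnorm_linearization_smallo[OF v_deriv v'_cont \<phi> less_imp_le[OF r_pos]])
  have "eventually (\<lambda>\<psi>. norm (integral {-\<delta> \<phi>..0} (\<lambda>s. v (\<psi> s) - v (\<phi> s) - v' (\<phi> s) * (\<psi> s - \<phi> s)))
          \<le> r * norm (?rem \<psi>)) (C_nhds r \<phi>)"
    using eventually_Cspace_C_nhds
  proof (rule eventually_mono)
    fix \<psi> assume \<psi>: "\<psi> \<in> Cspace r"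
    have "(\<lambda>s. v (\<psi> s) - v (\<phi> s) - v' (\<phi> s) * (\<psi> s - \<phi> s)) \<in> Cspace r"
      using Cspace_comp[OF v_cont \<psi>] Cspace_comp[OF v_cont \<phi>] Cspace_comp[OF v'_cont \<phi>] \<phi> \<psi>
      by (intro Cspace_diff Cspace_mult)
    with integral_tail_bound_Cnorm Cnorm_nonneg delta_mem[OF \<phi>]
    show "norm (integral {-\<delta> \<phi>..0} (\<lambda>s. v (\<psi> s) - v (\<phi> s) - v' (\<phi> s) * (\<psi> s - \<phi> s)))
          \<le> r * norm (?rem \<psi>)" by simp
  qed
  then show "(\<lambda>\<psi>. integral {-\<delta> \<phi>..0} (\<lambda>s. v (\<psi> s) - v (\<phi> s) - v' (\<phi> s) * (\<psi> s - \<phi> s)))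
      \<in> O[C_nhds r \<phi>](?rem)"
    by (rule bigoI)
qed

lemma delta_has_derivative:
  assumes \<phi>: "\<phi> \<in> Cspace r"
  shows "C_has_derivative r \<delta> (delta_deriv \<phi>) \<phi>"
proof (rule C_has_derivative_if_smallo[OF less_imp_le[OF r_pos] \<phi> delta_deriv_bounded_linear[OF \<phi>]])
  let ?F = "C_nhds r \<phi>" and ?n = "\<lambda>\<psi>. Cnorm r (\<lambda>s. \<psi> s - \<phi> s)"
  define c where "c = v (\<phi> (- \<delta> \<phi>))"
  have "c \<noteq> 0" unfolding c_def using v_pos[of "\<phi> (- \<delta> \<phi>)"] by simp
  have "\<forall>\<psi>\<in>Cspace r. \<exists>t\<in>{-max (\<delta> \<psi>) (\<delta> \<phi>)..-min (\<delta> \<psi>) (\<delta> \<phi>)}.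
      (\<delta> \<psi> - \<delta> \<phi>) * v (\<psi> t) = - integral {-\<delta> \<phi>..0} (\<lambda>s. v (\<psi> s) - v (\<phi> s))"
    using delta_diff_mvt[OF \<phi>] by blast
  from bchoice[OF this[unfolded Bex_def]] obtain \<tau> where \<tau>: "\<forall>\<psi>\<in>Cspace r.
      \<tau> \<psi> \<in> {-max (\<delta> \<psi>) (\<delta> \<phi>)..-min (\<delta> \<psi>) (\<delta> \<phi>)} \<and>
      (\<delta> \<psi> - \<delta> \<phi>) * v (\<psi> (\<tau> \<psi>)) = - integral {-\<delta> \<phi>..0} (\<lambda>s. v (\<psi> s) - v (\<phi> s))"
    by blast
  define R where "R \<psi> = (\<delta> \<psi> - \<delta> \<phi>) * (v (\<psi> (\<tau> \<psi>)) - c)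
      + integral {-\<delta> \<phi>..0} (\<lambda>s. v (\<psi> s) - v (\<phi> s) - v' (\<phi> s) * (\<psi> s - \<phi> s))" for \<psi>
  have "eventually (\<lambda>\<psi>. \<tau> \<psi> \<in> {-max (\<delta> \<psi>) (\<delta> \<phi>)..-min (\<delta> \<psi>) (\<delta> \<phi>)}) ?F"
    using eventually_Cspace_C_nhds by (rule eventually_mono) (use \<tau> in blast)
  then have "((\<lambda>\<psi>. v (\<psi> (\<tau> \<psi>))) \<longlongrightarrow> c) ?F"
    unfolding c_def by (rule tendsto_v_between_delays[OF \<phi>])
  then have "(\<lambda>\<psi>. v (\<psi> (\<tau> \<psi>)) - c) \<in> o[?F](\<lambda>_. 1)"
    by (intro smalloI_tendsto) (auto simp: LIM_zero)
  from landau_o.big_small_mult[OF delta_diff_bigo[OF \<phi>] this]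
  have "(\<lambda>\<psi>. (\<delta> \<psi> - \<delta> \<phi>) * (v (\<psi> (\<tau> \<psi>)) - c)) \<in> o[?F](?n)" by simp
  with integral_linearization_smallo[OF \<phi>] \<open>c \<noteq> 0\<close>
  have remainder_smallo: "(\<lambda>\<psi>. - 1 / c * R \<psi>) \<in> o[?F](?n)"
    unfolding R_def by (simp add: sum_in_smallo)
  have remainder_eq: "eventually (\<lambda>\<psi>. - 1 / c * R \<psi> = \<delta> \<psi> - \<delta> \<phi> - delta_deriv \<phi> (\<lambda>s. \<psi> s - \<phi> s)) ?F"
    using eventually_Cspace_C_nhds
  proof (rule eventually_mono)
    fix \<psi> assume \<psi>: "\<psi> \<in> Cspace r"
    show "- 1 / c * R \<psi> = \<delta> \<psi> - \<delta> \<phi> - delta_deriv \<phi> (\<lambda>s. \<psi> s - \<phi> s)"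
      unfolding R_def
      by (rule delta_remainder_eq[OF \<phi> \<psi> conjunct2[OF bspec[OF \<tau> \<psi>]], symmetric, folded c_def])
  qed
  show "(\<lambda>\<psi>. \<delta> \<psi> - \<delta> \<phi> - delta_deriv \<phi> (\<lambda>s. \<psi> s - \<phi> s)) \<in> o[?F](?n)"
    using landau_o.small.in_cong[OF remainder_eq] remainder_smallo by blast
qed

lemma delay_integral_diff_le:
  assumes \<phi>: "\<phi> \<in> Cspace r" and \<psi>: "\<psi> \<in> Cspace r" and w: "w \<in> Cspace r"
  defines "M \<equiv> Cnorm r (\<lambda>s. v' (\<phi> s))" and "U \<equiv> Cnorm r (\<lambda>s. v' (\<psi> s) - v' (\<phi> s))"
  shows "\<bar>integral {- \<delta> \<psi>..0} (\<lambda>s. v' (\<psi> s) * w s) - integral {- \<delta> \<phi>..0} (\<lambda>s. v' (\<phi> s) * w s)\<bar>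
           \<le> (\<bar>\<delta> \<psi> - \<delta> \<phi>\<bar> * (M + U) + r * U) * Cnorm r w"
proof -
  have v'\<phi>: "(\<lambda>s. v' (\<phi> s)) \<in> Cspace r" and v'\<psi>: "(\<lambda>s. v' (\<psi> s)) \<in> Cspace r"
    using Cspace_comp[OF v'_cont] \<phi> \<psi> by auto
  have dv': "(\<lambda>s. v' (\<psi> s) - v' (\<phi> s)) \<in> Cspace r" using Cspace_diff[OF v'\<phi> v'\<psi>] .
  have d: "\<delta> \<phi> \<in> {0<..<r}" "\<delta> \<psi> \<in> {0<..<r}" using delta_mem \<phi> \<psi> by auto
  have M: "0 \<le> M" and U: "0 \<le> U"
    unfolding M_def U_def using Cnorm_nonneg v'\<phi> dv' r_pos by auto
  define I\<psi> where "I\<psi> = integral {- \<delta> \<psi>..0} (\<lambda>s. v' (\<psi> s) * w s)"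
  define I\<phi> where "I\<phi> = integral {- \<delta> \<phi>..0} (\<lambda>s. v' (\<phi> s) * w s)"
  define J where "J = integral {- \<delta> \<phi>..0} (\<lambda>s. v' (\<psi> s) * w s)"
  obtain t where t: "t \<in> {-max (\<delta> \<psi>) (\<delta> \<phi>)..-min (\<delta> \<psi>) (\<delta> \<phi>)}"
    "I\<psi> - J = (\<delta> \<psi> - \<delta> \<phi>) * (v' (\<psi> t) * w t)"
    using integral_tail_diff_mvt[OF Cspace_mult[OF v'\<psi> w, unfolded Cspace_def mem_Collect_eq],
        of "\<delta> \<psi>" "\<delta> \<phi>"] d unfolding I\<psi>_def J_def by auto
  have "max (\<delta> \<psi>) (\<delta> \<phi>) < r" "0 < min (\<delta> \<psi>) (\<delta> \<phi>)" using d by auto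
  with t(1) have t': "t \<in> {-r..0}" by auto
  have "\<bar>v' (\<psi> t)\<bar> \<le> M + U"
    using abs_le_Cnorm[OF v'\<phi> t'] abs_le_Cnorm[OF dv' t'] unfolding M_def U_def by linarith
  then have "\<bar>I\<psi> - J\<bar> \<le> \<bar>\<delta> \<psi> - \<delta> \<phi>\<bar> * ((M + U) * Cnorm r w)"
    unfolding t(2) abs_mult using abs_le_Cnorm[OF w t'] M U
    by (intro mult_left_mono mult_mono) auto
  moreover have "\<bar>J - I\<phi>\<bar> \<le> r * (U * Cnorm r w)"
  proof -
    have "(\<lambda>s. v' (\<psi> s) * w s) integrable_on {- \<delta> \<phi>..0}"
      and "(\<lambda>s. v' (\<phi> s) * w s) integrable_on {- \<delta> \<phi>..0}"
      using d by (auto intro!: Cspace_integrable_tail Cspace_mult[OF v'\<psi> w] Cspace_mult[OF v'\<phi> w])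
    from integral_diff[OF this]
    have "J - I\<phi> = integral {- \<delta> \<phi>..0} (\<lambda>s. (v' (\<psi> s) - v' (\<phi> s)) * w s)"
      unfolding J_def I\<phi>_def by (simp add: left_diff_distrib)
    then show ?thesis
      unfolding U_def using integral_tail_mult_bound_Cnorm[OF dv' w] d by simp
  qed
  ultimately have "\<bar>I\<psi> - I\<phi>\<bar> \<le> \<bar>\<delta> \<psi> - \<delta> \<phi>\<bar> * ((M + U) * Cnorm r w) + r * (U * Cnorm r w)"
    using abs_triangle_ineq[of "I\<psi> - J" "J - I\<phi>"] by simp
  then show ?thesis unfolding I\<psi>_def I\<phi>_def by (simp add: algebra_simps)
qed

lemma delta_deriv_diff_le:
  assumes \<phi>: "\<phi> \<in> Cspace r" and \<psi>: "\<psi> \<in> Cspace r" and w: "w \<in> Cspace r"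
  defines "M \<equiv> Cnorm r (\<lambda>s. v' (\<phi> s))" and "U \<equiv> Cnorm r (\<lambda>s. v' (\<psi> s) - v' (\<phi> s))"
  shows "\<bar>delta_deriv \<psi> w - delta_deriv \<phi> w\<bar>
           \<le> ((\<bar>\<delta> \<psi> - \<delta> \<phi>\<bar> * (M + U) + r * U) / v0
               + r * M * \<bar>1 / v (\<psi> (- \<delta> \<psi>)) - 1 / v (\<phi> (- \<delta> \<phi>))\<bar>) * Cnorm r w"
proof -
  define I\<phi> where "I\<phi> = integral {- \<delta> \<phi>..0} (\<lambda>s. v' (\<phi> s) * w s)"
  define I\<psi> where "I\<psi> = integral {- \<delta> \<psi>..0} (\<lambda>s. v' (\<psi> s) * w s)"
  define c\<phi> where "c\<phi> = v (\<phi> (- \<delta> \<phi>))"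
  define c\<psi> where "c\<psi> = v (\<psi> (- \<delta> \<psi>))"
  have c: "v0 \<le> c\<phi>" "v0 \<le> c\<psi>" unfolding c\<phi>_def c\<psi>_def by (rule v_ge)+
  have "delta_deriv \<psi> w - delta_deriv \<phi> w = - (I\<psi> - I\<phi>) / c\<psi> - I\<phi> * (1 / c\<psi> - 1 / c\<phi>)"
    unfolding delta_deriv_def I\<phi>_def[symmetric] I\<psi>_def[symmetric] c\<phi>_def[symmetric] c\<psi>_def[symmetric]
    using c v0_pos by (simp add: field_simps)
  also have "\<bar>\<dots>\<bar> \<le> \<bar>I\<psi> - I\<phi>\<bar> / c\<psi> + \<bar>I\<phi>\<bar> * \<bar>1 / c\<psi> - 1 / c\<phi>\<bar>"
    using abs_triangle_ineq4[of "- (I\<psi> - I\<phi>) / c\<psi>" "I\<phi> * (1 / c\<psi> - 1 / c\<phi>)"] c v0_pos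
    by (simp add: abs_mult abs_minus_commute)
  also have "\<dots> \<le> \<bar>I\<psi> - I\<phi>\<bar> / v0 + \<bar>I\<phi>\<bar> * \<bar>1 / c\<psi> - 1 / c\<phi>\<bar>"
    using c v0_pos by (intro add_right_mono divide_left_mono) auto
  also have "\<dots> \<le> (\<bar>\<delta> \<psi> - \<delta> \<phi>\<bar> * (M + U) + r * U) * Cnorm r w / v0
                  + r * M * Cnorm r w * \<bar>1 / c\<psi> - 1 / c\<phi>\<bar>"
    using delay_integral_diff_le[OF \<phi> \<psi> w] abs_delay_integral_le[OF \<phi> w] v0_pos
    unfolding I\<phi>_def I\<psi>_def M_def U_def
    by (intro add_mono divide_right_mono mult_right_mono) auto
  also have "\<dots> = ((\<bar>\<delta> \<psi> - \<delta> \<phi>\<bar> * (M + U) + r * U) / v0 + r * M * \<bar>1 / c\<psi> - 1 / c\<phi>\<bar>) * Cnorm r w"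
    by (simp add: distrib_right)
  finally show ?thesis unfolding c\<phi>_def c\<psi>_def .
qed

lemma delta_deriv_continuous:
  assumes \<phi>: "\<phi> \<in> Cspace r"
  shows "\<forall>\<epsilon>>0. \<exists>\<eta>>0. \<forall>\<psi>\<in>Cspace r. Cnorm r (\<lambda>s. \<psi> s - \<phi> s) < \<eta> \<longrightarrow>
           (\<forall>w\<in>Cspace r. \<bar>delta_deriv \<psi> w - delta_deriv \<phi> w\<bar> \<le> \<epsilon> * Cnorm r w)"
proof (rule C_operator_continuous_if_bound[OF less_imp_le[OF r_pos]])
  define M where "M = Cnorm r (\<lambda>s. v' (\<phi> s))"
  define U where "U \<psi> = Cnorm r (\<lambda>s. v' (\<psi> s) - v' (\<phi> s))" for \<psi>
  define c where "c = v (\<phi> (- \<delta> \<phi>))"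
  have "c \<noteq> 0" unfolding c_def using v_pos[of "\<phi> (- \<delta> \<phi>)"] by simp
  have U: "(U \<longlongrightarrow> 0) (C_nhds r \<phi>)"
    unfolding U_def using tendsto_Cnorm_comp_diff_C_nhds[OF v'_cont \<phi>] r_pos by simp
  have "((\<lambda>\<psi>. v (\<psi> (- \<delta> \<psi>))) \<longlongrightarrow> c) (C_nhds r \<phi>)"
    unfolding c_def by (rule tendsto_v_between_delays[OF \<phi>]) auto
  then have "((\<lambda>\<psi>. (\<bar>\<delta> \<psi> - \<delta> \<phi>\<bar> * (M + U \<psi>) + r * U \<psi>) / v0
                  + r * M * \<bar>1 / v (\<psi> (- \<delta> \<psi>)) - 1 / c\<bar>) \<longlongrightarrow>
          (\<bar>\<delta> \<phi> - \<delta> \<phi>\<bar> * (M + 0) + r * 0) / v0 + r * M * \<bar>1 / c - 1 / c\<bar>) (C_nhds r \<phi>)"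
    using \<open>c \<noteq> 0\<close> v0_pos by (intro tendsto_intros tendsto_delta[OF \<phi>] U) auto
  then show "((\<lambda>\<psi>. (\<bar>\<delta> \<psi> - \<delta> \<phi>\<bar> * (M + U \<psi>) + r * U \<psi>) / v0
                  + r * M * \<bar>1 / v (\<psi> (- \<delta> \<psi>)) - 1 / c\<bar>) \<longlongrightarrow> 0) (C_nhds r \<phi>)"
    by simp
  show "eventually (\<lambda>\<psi>. \<forall>w\<in>Cspace r. \<bar>delta_deriv \<psi> w - delta_deriv \<phi> w\<bar>
          \<le> ((\<bar>\<delta> \<psi> - \<delta> \<phi>\<bar> * (M + U \<psi>) + r * U \<psi>) / v0
              + r * M * \<bar>1 / v (\<psi> (- \<delta> \<psi>)) - 1 / c\<bar>) * Cnorm r w) (C_nhds r \<phi>)"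
    using eventually_Cspace_C_nhds
    by (rule eventually_mono) (use delta_deriv_diff_le[OF \<phi>] in \<open>simp add: M_def U_def c_def\<close>)
qed

lemma delta_const:
  assumes \<phi>: "\<phi> \<in> Cspace r" and const: "\<forall>s\<in>{-r..0}. \<phi> s = \<xi>"
  shows "\<delta> \<phi> = a / v \<xi>"
proof (rule delta_eqI[OF \<phi>])
  have "a / v \<xi> \<le> a / v0" using a_pos v0_pos v_ge[of \<xi>] v_pos[of \<xi>] by (intro divide_left_mono) auto
  then show u: "a / v \<xi> \<in> {0<..<r}" using r_gt a_pos v_pos[of \<xi>] by auto
  have "integral {-(a / v \<xi>)..0} (\<lambda>s. v (\<phi> s)) = integral {-(a / v \<xi>)..0} (\<lambda>s. v \<xi>)"
    using const u by (intro integral_cong) auto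
  then show "integral {-(a / v \<xi>)..0} (\<lambda>s. v (\<phi> s)) = a"
    using u v_pos[of \<xi>] by simp
qed

lemma delta_deriv_const:
  assumes \<phi>: "\<phi> \<in> Cspace r" and const: "\<forall>s\<in>{-r..0}. \<phi> s = \<xi>"
  shows "delta_deriv \<phi> w = - (v' \<xi> / v \<xi>) * integral {- (a / v \<xi>)..0} w"
proof -
  have u: "\<delta> \<phi> \<in> {0<..<r}" using delta_mem[OF \<phi>] .
  have "integral {- \<delta> \<phi>..0} (\<lambda>s. v' (\<phi> s) * w s) = integral {- \<delta> \<phi>..0} (\<lambda>s. v' \<xi> * w s)"
    using const u by (intro integral_cong) auto
  moreover have "\<phi> (- \<delta> \<phi>) = \<xi>" using const u by auto
  ultimately show ?thesis
    unfolding delta_deriv_def delta_const[OF assms] by simp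
qed

end

theorem proposition2p1:
  fixes a v0 r :: real and v v' :: "real \<Rightarrow> real"
  assumes "a > 0" and "v0 > 0"
    and "\<And>x. v x \<ge> v0"
    and "\<And>x. (v has_real_derivative v' x) (at x)"
    and "continuous_on UNIV v'"
    and "r > a / v0"
  shows "(\<forall>\<phi>\<in>Cspace r. delta a r v \<phi> \<in> {0<..<r}) \<and>
         C_continuously_differentiable r (delta a r v)
           (\<lambda>\<phi> w. - integral {- delta a r v \<phi>..0} (\<lambda>s. v' (\<phi> s) * w s)
                     / v (\<phi> (- delta a r v \<phi>))) \<and>
         (\<forall>\<phi>\<in>Cspace r. \<forall>\<xi>. (\<forall>s\<in>{-r..0}. \<phi> s = \<xi>) \<longrightarrow>
            delta a r v \<phi> = a / v \<xi> \<and>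
            (\<forall>w\<in>Cspace r.
               - integral {- delta a r v \<phi>..0} (\<lambda>s. v' (\<phi> s) * w s)
                     / v (\<phi> (- delta a r v \<phi>))
               = - (v' \<xi> / v \<xi>) * integral {- (a / v \<xi>)..0} w))"
proof -
  interpret delay_functional a v0 r v v' using assms by unfold_locales
  have "C_continuously_differentiable r \<delta> delta_deriv"
    unfolding C_continuously_differentiable_def
    using delta_has_derivative delta_deriv_continuous by blast
  then show ?thesis
    using delta_mem delta_const delta_deriv_const unfolding delta_deriv_def by auto
qed

end
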